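(* Let $\mathcal A\subset\mathbb R^d$ be finite and nonempty with $\mathcal D=\mathrm{conv}(\mathcal A)=\{x:Bx\le c\}$. Let $f(x)=g(Ax)+\langle b,x\rangle$ with $A\in\mathbb R^{m\times d}$, $b\in\mathbb R^d$, where $g$ is continuously differentiable on an open set containing $A\mathcal D$ and $\mu_g$-strongly convex on $A\mathcal D$ with $\mu_g>0$, and let $\tilde\mu$ be the constant $\tilde\mu:=1/\big(2\theta^2(\|b\|M+3GM_A+\frac{2}{\mu_g}(G^2+1))\big)$ defined in the context. Then $\tilde\mu_f\ge\tilde\mu\cdot\mathrm{PWidth}(\mathcal A)^2$.
   Context: Euclidean norms. $\mathcal X^*:=\arg\min_{\mathcal D}f$; $G:=\max_{x\in\mathcal D}\|\nabla g(Ax)\|$, $M:=\mathrm{diam}(\mathcal D)$, $M_A:=\mathrm{diam}(A\mathcal D)$; $\theta>0$ is a Hoffman constant: for every $t\in\mathbb R^m,s\in\mathbb R$ with $P_{t,s}:=\{y:Ay=t,\langle b,y\rangle=s,By\le c\}\ne\emptyset$ and every $x$ with $Bx\le c$, $d(x,P_{t,s})\le\theta\|(Ax-t,\langle b,x\rangle-s)\|$. For a finite $\mathcal B$ and $x\in\mathrm{conv}(\mathcal B)$, $\mathcal S_x(\mathcal B)$ is the family of subsets $S\subseteq\mathcal B$ such that $x$ is a proper convex combination of all elements of $S$ (all coefficients positive); $\mathcal S_x=\mathcal S_x(\mathcal A)$. For $r\neq0$, $\mathrm{PdirW}(\mathcal B,r,x):=\min_{S\in\mathcal S_x(\mathcal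 B)}\max_{s\in\mathcal B,v\in S}\langle r/\|r\|,s-v\rangle$; $\mathrm{PWidth}(\mathcal A):=\inf\{\mathrm{PdirW}(\mathcal K\cap\mathcal A,r,x)\}$ over nonempty faces $\mathcal K$ of $\mathcal D$ (including $\mathcal D$), $x\in\mathcal K$, $r\in\mathrm{cone}(\mathcal K-x)\setminus\{0\}$. For $x\in\mathcal D$: $s_f(x)\in\arg\min_{a\in\mathcal A}\langle\nabla f(x),a\rangle$; for $S\in\mathcal S_x$, $v_S(x)\in\arg\max_{v\in S}\langle\nabla f(x),v\rangle$; $v_f(x)$ is an element of $\{v_S(x):S\in\mathcal S_x\}$ minimizing $\langle\nabla f(x),\cdot\rangle$; for $\langle\nabla f(x),x^*-x\rangle<0$, $\gamma^{A}(x,x^* ):=\frac{\langle-\nabla f(x),x^*-x\rangle}{\langle-\nabla f(x),s_f(x)-v_f(x)\rangle}$. Generalized geometric strong convexity constant: $\tilde\mu_f:=\inf_{x\in\mathcal D\setminus\mathcal X^*}\ \sup_{x^*\in\mathcal X^*:\langle\nabla f(x),x^*-x\rangle<0}\frac{1}{2\gamma^{A}(x,x^* )^2}\big(f(x^* )-f(x)-2\langle\nabla f(x),x^*-x\rangle\big)$. *)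

theory Defs
  imports "HOL-Analysis.Analysis"
begin

definition strongly_convex_on_with :: "real \<Rightarrow> 'a::real_normed_vector set \<Rightarrow> ('a \<Rightarrow> real) \<Rightarrow> bool" where
  "strongly_convex_on_with \<mu> C g \<longleftrightarrow>
     (\<forall>x\<in>C. \<forall>y\<in>C. \<forall>t::real. 0 \<le> t \<and> t \<le> 1 \<longrightarrow>
        g ((1 - t) *\<^sub>R x + t *\<^sub>R y) \<le> (1 - t) * g x + t * g y - \<mu> / 2 * t * (1 - t) * (norm (x - y))\<^sup>2)"

definition Sx :: "'a::real_vector set \<Rightarrow> 'a \<Rightarrow> 'a set set" where
  "Sx B x = {S. S \<subseteq> B \<and> finite S \<and>
      (\<exists>w. (\<forall>v\<in>S. 0 < w v) \<and> sum w S = 1 \<and> (\<Sum>v\<in>S. w v *\<^sub>R v) = x)}"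

definition PdirW :: "'a::real_inner set \<Rightarrow> 'a \<Rightarrow> 'a \<Rightarrow> real" where
  "PdirW B r x = Min {Max {inner (r /\<^sub>R norm r) (s - v) | s v. s \<in> B \<and> v \<in> S} | S. S \<in> Sx B x}"

text \<open>PWidth(A), with D = conv(A); infimum taken in the extended reals (inf of empty set = +infinity).\<close>
definition PWidth :: "'a::euclidean_space set \<Rightarrow> ereal" where
  "PWidth A = Inf {ereal (PdirW (K \<inter> A) r x) | K x r.
       K face_of (convex hull A) \<and> K \<noteq> {} \<and> x \<in> K \<and>
       r \<in> (cone hull ((\<lambda>y. y - x) ` K)) - {0}}"

definition Xstar :: "('a \<Rightarrow> real) \<Rightarrow> 'a set \<Rightarrow> 'a set" where
  "Xstar f D = {x \<in> D. \<forall>y\<in>D. f x \<le> f y}"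

text \<open>Frank-Wolfe vertex s_f(x), away vertices v_S(x), v_f(x); gf is the gradient of f.\<close>
definition s_f :: "'a::real_inner set \<Rightarrow> ('a \<Rightarrow> 'a) \<Rightarrow> 'a \<Rightarrow> 'a" where
  "s_f A gf x = arg_min_on (\<lambda>a. inner (gf x) a) A"

definition v_S :: "('a::real_inner \<Rightarrow> 'a) \<Rightarrow> 'a \<Rightarrow> 'a set \<Rightarrow> 'a" where
  "v_S gf x S = (ARG_MAX (\<lambda>v. inner (gf x) v) v. v \<in> S)"

definition v_f :: "'a::real_inner set \<Rightarrow> ('a \<Rightarrow> 'a) \<Rightarrow> 'a \<Rightarrow> 'a" where
  "v_f A gf x = arg_min_on (\<lambda>v. inner (gf x) v) (v_S gf x ` Sx A x)"

definition gammaA :: "'a::real_inner set \<Rightarrow> ('a \<Rightarrow> 'a) \<Rightarrow> 'a \<Rightarrow> 'a \<Rightarrow> real" where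
  "gammaA A gf x xs = inner (- gf x) (xs - x) / inner (- gf x) (s_f A gf x - v_f A gf x)"

definition mu_tilde_f :: "'a::euclidean_space set \<Rightarrow> ('a \<Rightarrow> real) \<Rightarrow> ('a \<Rightarrow> 'a) \<Rightarrow> ereal" where
  "mu_tilde_f A f gf =
     (INF x \<in> convex hull A - Xstar f (convex hull A).
        SUP xs \<in> {xs \<in> Xstar f (convex hull A). inner (gf x) (xs - x) < 0}.
          ereal (1 / (2 * (gammaA A gf x xs)\<^sup>2) * (f xs - f x - 2 * inner (gf x) (xs - x))))"

end

theory Submission
  imports Defs
begin

text \<open>
  Let \<open>x \<in> D\<close> be non-optimal and \<open>x\<^sup>*\<close> its nearest point in \<open>X\<^sup>*\<close>. Strong convexity of \<open>g\<close> forces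
  all minimizers to share \<open>A x\<^sup>*\<close> and \<open>\<langle>b, x\<^sup>*\<rangle>\<close>, so \<open>X\<^sup>*\<close> is a polyhedral fibre and Hoffman's bound
  gives \<open>\<parallel>x - x\<^sup>*\<parallel> \<le> \<theta> \<parallel>(A x - A x\<^sup>*, \<langle>b, x - x\<^sup>*\<rangle>)\<parallel>\<close>. The first-order strong convexity inequality and the
  bound \<open>G\<close> on \<open>\<nabla>g\<close> bound the squared residual by the constant of the theorem times
  \<open>f(x\<^sup>*) - f(x) - 2\<langle>\<nabla>f(x), x\<^sup>* - x\<rangle>\<close>.

  The pyramidal width enters through the Moreau decomposition \<open>r = p + n\<close> of \<open>r = -\<nabla>f(x)\<close> with respect
  to the tangent cone of \<open>D\<close> at \<open>x\<close>: \<open>n\<close> supports \<open>D\<close> at \<open>x\<close>, so the exposed face it cuts out contains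
  every active set \<open>S \<in> S\<^sub>x\<close>, and \<open>p\<close> lies in the cone of that face. Comparing with the definition of
  \<open>PWidth\<close> gives \<open>PWidth \<cdot> \<langle>r, x\<^sup>* - x\<rangle> \<le> \<parallel>x\<^sup>* - x\<parallel> \<langle>r, s\<^sub>f(x) - v\<^sub>f(x)\<rangle>\<close>, and combining the two estimates
  yields the bound on \<open>\<mu>\<^sub>f\<close>.
\<close>

lemma Sx_memD:
  assumes "S \<in> Sx B x"
  shows "S \<noteq> {}" "S \<subseteq> B" "finite S"
  using assms unfolding Sx_def by auto

lemma finite_Sx: "finite B \<Longrightarrow> finite (Sx B x)"
  by (rule finite_subset[of _ "Pow B"]) (auto simp: Sx_def)

lemma Sx_nonempty:
  fixes B :: "'a::real_vector set"
  assumes "finite B" "x \<in> convex hull B"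
  shows "Sx B x \<noteq> {}"
proof -
  obtain u where u: "\<forall>y\<in>B. 0 \<le> u y" "sum u B = 1" "(\<Sum>y\<in>B. u y *\<^sub>R y) = x"
    using assms convex_hull_finite[OF assms(1)] by auto
  define S where "S = {y\<in>B. u y > 0}"
  have "sum u S = sum u B"
    by (rule sum.mono_neutral_left) (use assms(1) u(1) in \<open>auto simp: S_def\<close>)
  moreover have "(\<Sum>y\<in>S. u y *\<^sub>R y) = (\<Sum>y\<in>B. u y *\<^sub>R y)"
    by (rule sum.mono_neutral_left) (use assms(1) u(1) in \<open>auto simp: S_def\<close>)
  ultimately have "S \<in> Sx B x" using u assms(1) unfolding Sx_def S_def by auto
  then show ?thesis by auto
qed

lemma Sx_supporting_hyperplane:
  fixes n :: "'a::real_inner"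
  assumes S: "S \<in> Sx C x" and supp: "\<And>w. w \<in> C \<Longrightarrow> inner n w \<le> inner n x"
  shows "S \<in> Sx {w \<in> C. inner n w = inner n x} x"
proof -
  obtain wt where wt: "\<forall>v\<in>S. 0 < wt v" "sum wt S = 1" "(\<Sum>v\<in>S. wt v *\<^sub>R v) = x"
    using S unfolding Sx_def by auto
  have SC: "S \<subseteq> C" and finS: "finite S" using Sx_memD[OF S] by auto
  have "(\<Sum>v\<in>S. wt v * (inner n x - inner n v)) = sum wt S * inner n x - inner n (\<Sum>v\<in>S. wt v *\<^sub>R v)"
    by (simp add: algebra_simps sum_subtractf sum_distrib_right inner_sum_right)
  also have "\<dots> = 0" using wt by simp
  finally have sum0: "(\<Sum>v\<in>S. wt v * (inner n x - inner n v)) = 0" .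
  have nonneg: "0 \<le> wt v * (inner n x - inner n v)" if "v \<in> S" for v
    using wt(1) supp SC that by (simp add: subset_iff less_imp_le)
  have "\<forall>v\<in>S. wt v * (inner n x - inner n v) = 0"
    using sum0 nonneg by (simp add: sum_nonneg_eq_0_iff[OF finS])
  then have "\<forall>v\<in>S. inner n v = inner n x" using wt(1) by force
  then have "S \<subseteq> {w \<in> C. inner n w = inner n x}" using SC by auto
  then show ?thesis using wt finS unfolding Sx_def by blast
qed

lemma v_S_greatest:
  assumes "finite S" "S \<noteq> {}"
  shows "v_S gf x S \<in> S" "\<And>v. v \<in> S \<Longrightarrow> inner (gf x) v \<le> inner (gf x) (v_S gf x S)"
proof -
  have "Max ((\<lambda>v. inner (gf x) v) ` S) \<in> (\<lambda>v. inner (gf x) v) ` S" using assms by simp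
  then obtain m where m: "m \<in> S" "inner (gf x) m = Max ((\<lambda>v. inner (gf x) v) ` S)" by auto
  then have m_max: "inner (gf x) v \<le> inner (gf x) m" if "v \<in> S" for v using assms(1) that by simp
  have "v_S gf x S \<in> S \<and> (\<forall>v\<in>S. inner (gf x) v \<le> inner (gf x) (v_S gf x S))"
    unfolding v_S_def by (rule arg_maxI[where x = m]) (use m m_max in \<open>auto simp: not_less\<close>)
  then show "v_S gf x S \<in> S" "\<And>v. v \<in> S \<Longrightarrow> inner (gf x) v \<le> inner (gf x) (v_S gf x S)"
    by auto
qed

lemma finite_inner_diff_set:
  assumes "finite B" "finite S"
  shows "finite {inner r (s - v) | s v. s \<in> B \<and> v \<in> S}"
proof -
  have "{inner r (s - v) | s v. s \<in> B \<and> v \<in> S} = (\<lambda>(s, v). inner r (s - v)) ` (B \<times> S)" by auto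
  then show ?thesis using assms by simp
qed

lemma PdirW_le_inner:
  fixes B :: "'a::real_inner set"
  assumes "finite B" "S \<in> Sx B x"
  obtains s v where "s \<in> B" "v \<in> S" "PdirW B r x \<le> inner (r /\<^sub>R norm r) (s - v)"
proof -
  have S: "S \<noteq> {}" "S \<subseteq> B" "finite S" using Sx_memD[OF assms(2)] by auto
  define W where "W S = {inner (r /\<^sub>R norm r) (s - v) | s v. s \<in> B \<and> v \<in> S}" for S
  have "PdirW B r x \<le> Max (W S)" unfolding PdirW_def W_def[symmetric]
    by (rule Min_le) (use finite_Sx[OF assms(1)] assms(2) in auto)
  moreover have "Max (W S) \<in> W S" unfolding W_def
    by (rule Max_in[OF finite_inner_diff_set[OF assms(1) S(3)]]) (use S(1,2) in auto)
  then obtain s v where "s \<in> B" "v \<in> S" "Max (W S) = inner (r /\<^sub>R norm r) (s - v)"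
    unfolding W_def by blast
  ultimately show ?thesis using that by simp
qed

lemma PdirW_nonneg:
  fixes B :: "'a::real_inner set"
  assumes "finite B" "Sx B x \<noteq> {}"
  shows "0 \<le> PdirW B r x"
proof -
  have "0 \<le> Max {inner (r /\<^sub>R norm r) (s - v) | s v. s \<in> B \<and> v \<in> S}"
    if S: "S \<in> Sx B x" for S
  proof (rule Max_ge[OF finite_inner_diff_set[OF assms(1) Sx_memD(3)[OF S]]])
    obtain v where "v \<in> S" using Sx_memD(1)[OF S] by auto
    then show "0 \<in> {inner (r /\<^sub>R norm r) (s - v) | s v. s \<in> B \<and> v \<in> S}"
      using Sx_memD(2)[OF S] by force
  qed
  then show ?thesis unfolding PdirW_def
    using finite_Sx[OF assms(1)] assms(2) by (subst Min_ge_iff) auto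
qed

lemma PWidth_nonneg:
  fixes A :: "'a::euclidean_space set"
  assumes "finite A"
  shows "0 \<le> PWidth A"
  unfolding PWidth_def
proof (rule Inf_greatest)
  fix z assume "z \<in> {ereal (PdirW (K \<inter> A) r x) | K x r. K face_of (convex hull A) \<and> K \<noteq> {} \<and>
    x \<in> K \<and> r \<in> (cone hull ((\<lambda>y. y - x) ` K)) - {0}}"
  then obtain K x r where K: "K face_of convex hull A" "x \<in> K" and z: "z = ereal (PdirW (K \<inter> A) r x)"
    by blast
  obtain S where S: "S \<subseteq> A" "K = convex hull S"
    using face_of_convex_hull_subset[OF finite_imp_compact[OF assms] K(1)] by blast
  then have "convex hull S \<subseteq> convex hull (K \<inter> A)" using hull_subset[of S convex] by (intro hull_mono) auto
  then have "Sx (K \<inter> A) x \<noteq> {}" using Sx_nonempty[of "K \<inter> A" x] assms K(2) S(2) by auto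
  then show "0 \<le> z" unfolding z using PdirW_nonneg[of "K \<inter> A" x r] assms by auto
qed

lemma convex_cone_hull_translated:
  "convex_cone hull ((\<lambda>a. a - x) ` A) = insert 0 (\<Union>w\<in>convex hull A. \<Union>c\<in>{0..}. {c *\<^sub>R (w - x)})"
proof -
  have "convex hull ((\<lambda>a. a - x) ` A) = (\<lambda>a. a - x) ` (convex hull A)"
    using convex_hull_translation[of "- x" A] by (simp add: image_image)
  then show ?thesis by (simp add: convex_cone_hull_convex_hull)
qed

lemma closest_point_convex_cone:
  fixes C :: "'a::euclidean_space set"
  assumes "closed C" "convex_cone C" "z \<in> C"
  shows "inner (r - closest_point C r) (closest_point C r) = 0"
    and "inner (r - closest_point C r) z \<le> 0"
proof -
  let ?p = "closest_point C r"
  have cvx: "convex C" and con: "conic C" and "C \<noteq> {}" using assms(2) unfolding convex_cone_def by auto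
  then have pC: "?p \<in> C" using closest_point_in_set[OF assms(1)] by blast
  have "0 \<in> C" "2 *\<^sub>R ?p \<in> C" using conic_contains_0 con pC \<open>C \<noteq> {}\<close> unfolding conic_def by auto
  then have "inner (r - ?p) (0 - ?p) \<le> 0" "inner (r - ?p) (2 *\<^sub>R ?p - ?p) \<le> 0"
    using closest_point_dot[OF cvx assms(1)] by blast+
  then have "- inner (r - ?p) ?p \<le> 0" "inner (r - ?p) ?p \<le> 0"
    by (simp_all add: inner_diff_right scaleR_2 inner_add_right)
  then show orth: "inner (r - ?p) ?p = 0" by linarith
  show "inner (r - ?p) z \<le> 0"
    using closest_point_dot[OF cvx assms(1,3), of r] orth unfolding inner_diff_right by linarith
qed

lemma tangent_cone_decomposition:
  fixes A :: "'a::euclidean_space set"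
  assumes finA: "finite A" and x: "x \<in> convex hull A" and y: "y \<in> convex hull A"
    and pos: "inner r (y - x) > 0"
  obtains p n where "r = p + n" "\<And>z. z \<in> convex hull A \<Longrightarrow> inner n z \<le> inner n x"
    "inner r (y - x) \<le> inner p (y - x)"
    "p \<in> cone hull ((\<lambda>z. z - x) ` (convex hull A \<inter> {z. inner n z = inner n x})) - {0}"
proof -
  define C where "C = convex_cone hull ((\<lambda>a. a - x) ` A)"
  have C_eq: "C = insert 0 (\<Union>w\<in>convex hull A. \<Union>c\<in>{0..}. {c *\<^sub>R (w - x)})"
    unfolding C_def by (rule convex_cone_hull_translated)
  have clC: "closed C" unfolding C_def by (rule closed_convex_cone_hull) (use finA in auto)
  have ccC: "convex_cone C" unfolding C_def by (rule convex_cone_convex_cone_hull)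
  have diffC: "z - x \<in> C" if "z \<in> convex hull A" for z
    unfolding C_eq by (rule insertI2, rule UN_I[OF that], rule UN_I[where a = "1::real"]) auto
  define p where "p = closest_point C r"
  define n where "n = r - p"
  have pC: "p \<in> C" unfolding p_def using ccC closest_point_in_set[OF clC] by (auto simp: convex_cone_def)
  have np: "inner n p = 0" and nC: "\<And>z. z \<in> C \<Longrightarrow> inner n z \<le> 0"
    unfolding n_def p_def using closest_point_convex_cone[OF clC ccC] pC by blast+
  have supp: "inner n z \<le> inner n x" if "z \<in> convex hull A" for z
    using nC[OF diffC[OF that]] by (simp add: inner_diff_right)
  have "inner r (y - x) \<le> inner p (y - x)"
    using nC[OF diffC[OF y]] unfolding n_def by (simp add: inner_diff_left)
  moreover from this have "p \<noteq> 0" using pos by auto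
  then obtain c w where cw: "0 \<le> c" "w \<in> convex hull A" "p = c *\<^sub>R (w - x)"
    using pC unfolding C_eq by auto
  with \<open>p \<noteq> 0\<close> have "inner n w = inner n x" using np by (simp add: inner_diff_right)
  then have "w - x \<in> (\<lambda>z. z - x) ` (convex hull A \<inter> {z. inner n z = inner n x})"
    using cw(2) by blast
  then have "p \<in> cone hull ((\<lambda>z. z - x) ` (convex hull A \<inter> {z. inner n z = inner n x})) - {0}"
    unfolding cone_hull_expl using cw(1,3) \<open>p \<noteq> 0\<close> by blast
  moreover have "r = p + n" unfolding n_def by simp
  ultimately show ?thesis using that supp by blast
qed

lemma PWidth_le_ratio:
  fixes A :: "'a::euclidean_space set"
  assumes finA: "finite A" and x: "x \<in> convex hull A" and S: "S \<in> Sx A x"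
    and y: "y \<in> convex hull A" and pos: "inner r (y - x) > 0"
  obtains s v where "s \<in> A" "v \<in> S"
    "PWidth A \<le> ereal (norm (y - x) * inner r (s - v) / inner r (y - x))"
proof -
  obtain p n where rpn: "r = p + n" and supp: "\<And>z. z \<in> convex hull A \<Longrightarrow> inner n z \<le> inner n x"
    and rp: "inner r (y - x) \<le> inner p (y - x)"
    and pcone: "p \<in> cone hull ((\<lambda>z. z - x) ` (convex hull A \<inter> {z. inner n z = inner n x})) - {0}"
    using tangent_cone_decomposition[OF finA x y pos] by blast
  define F where "F = convex hull A \<inter> {z. inner n z = inner n x}"
  have FA: "F \<inter> A = {w \<in> A. inner n w = inner n x}"
    using hull_subset[of A convex] by (auto simp: F_def)
  have "F face_of convex hull A" unfolding F_def
    by (rule face_of_Int_supporting_hyperplane_le) (use supp in auto)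
  moreover have "x \<in> F" using x by (simp add: F_def)
  ultimately have PW: "PWidth A \<le> ereal (PdirW (F \<inter> A) p x)"
    unfolding PWidth_def using pcone unfolding F_def[symmetric] by (intro Inf_lower CollectI exI conjI) auto
  have SF: "S \<in> Sx (F \<inter> A) x" unfolding FA
    by (rule Sx_supporting_hyperplane[OF S]) (use supp hull_subset[of A convex] in auto)
  obtain s v where sv: "s \<in> F \<inter> A" "v \<in> S" and q: "PdirW (F \<inter> A) p x \<le> inner (p /\<^sub>R norm p) (s - v)"
    using PdirW_le_inner[OF _ SF] finA by blast
  have "v \<in> F \<inter> A" using Sx_memD(2)[OF SF] sv(2) by blast
  then have "inner n (s - v) = 0" using sv(1) by (simp add: F_def inner_diff_right)
  then have rsv: "inner r (s - v) = inner p (s - v)" unfolding rpn by (simp add: inner_add_left)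
  define q where "q = PdirW (F \<inter> A) p x"
  have q0: "0 \<le> q" unfolding q_def using PdirW_nonneg SF finA by blast
  have "p \<noteq> 0" using pcone by blast
  then have qp: "q * norm p \<le> inner p (s - v)" using q unfolding q_def by (simp add: field_simps)
  have "q * inner r (y - x) \<le> q * (norm p * norm (y - x))"
    using rp norm_cauchy_schwarz[of p "y - x"] q0 by (intro mult_left_mono) auto
  also have "\<dots> \<le> norm (y - x) * inner p (s - v)"
    using mult_left_mono[OF qp norm_ge_zero[of "y - x"]] by (simp add: ac_simps)
  also have "\<dots> = norm (y - x) * inner r (s - v)" using rsv by simp
  finally have "q \<le> norm (y - x) * inner r (s - v) / inner r (y - x)"
    using pos by (simp add: pos_le_divide_eq)
  then show ?thesis
    using that[OF _ sv(2)] sv(1) PW unfolding q_def by (meson IntD2 ereal_less_eq(3) order_trans)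
qed

lemma PWidth_le_FW_gap_ratio:
  fixes A :: "'a::euclidean_space set"
  assumes finA: "finite A" and x: "x \<in> convex hull A" and y: "y \<in> convex hull A"
    and pos: "inner (- gf x) (y - x) > 0"
  shows "PWidth A
    \<le> ereal (norm (y - x) * inner (- gf x) (s_f A gf x - v_f A gf x) / inner (- gf x) (y - x))"
proof -
  have "finite (v_S gf x ` Sx A x)" "v_S gf x ` Sx A x \<noteq> {}"
    using finite_Sx[OF finA] Sx_nonempty[OF finA x] by auto
  then have "v_f A gf x \<in> v_S gf x ` Sx A x" unfolding v_f_def by (rule arg_min_if_finite(1))
  then obtain S where S: "S \<in> Sx A x" and vf: "v_f A gf x = v_S gf x S" by blast
  obtain s v where sv: "s \<in> A" "v \<in> S"
    and PW: "PWidth A \<le> ereal (norm (y - x) * inner (- gf x) (s - v) / inner (- gf x) (y - x))"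
    using PWidth_le_ratio[OF finA x S y pos] by blast
  have "inner (gf x) v \<le> inner (gf x) (v_S gf x S)"
    using v_S_greatest(2)[OF Sx_memD(3,1)[OF S] sv(2)] .
  moreover have "inner (gf x) (s_f A gf x) \<le> inner (gf x) s"
    unfolding s_f_def using arg_min_least[OF finA _ sv(1)] sv(1) by blast
  ultimately have "inner (- gf x) (s - v) \<le> inner (- gf x) (s_f A gf x - v_f A gf x)"
    unfolding vf by (simp add: inner_diff_right)
  then have "norm (y - x) * inner (- gf x) (s - v) / inner (- gf x) (y - x)
      \<le> norm (y - x) * inner (- gf x) (s_f A gf x - v_f A gf x) / inner (- gf x) (y - x)"
    using pos by (intro divide_right_mono mult_left_mono) auto
  then show ?thesis using PW by (meson ereal_less_eq(3) order_trans)
qed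

lemma strongly_convex_on_with_difference_quotient:
  assumes sc: "strongly_convex_on_with \<mu> C g" and u: "u \<in> C" and v: "v \<in> C" and t: "0 < t" "t < 1"
  shows "(g (u + t *\<^sub>R (v - u)) - g u) / t \<le> g v - g u - \<mu> / 2 * (1 - t) * (norm (v - u))\<^sup>2"
proof -
  have "g ((1 - t) *\<^sub>R u + t *\<^sub>R v) \<le> (1 - t) * g u + t * g v - \<mu> / 2 * t * (1 - t) * (norm (u - v))\<^sup>2"
    using sc u v t unfolding strongly_convex_on_with_def by auto
  moreover have "(1 - t) *\<^sub>R u + t *\<^sub>R v = u + t *\<^sub>R (v - u)" by (simp add: algebra_simps)
  ultimately have "g (u + t *\<^sub>R (v - u)) - g u \<le> t * (g v - g u - \<mu> / 2 * (1 - t) * (norm (v - u))\<^sup>2)"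
    by (simp add: norm_minus_commute algebra_simps)
  then show ?thesis using t by (simp add: divide_simps mult.commute)
qed

lemma strongly_convex_on_with_gradient_ineq:
  fixes g :: "'a::real_inner \<Rightarrow> real"
  assumes sc: "strongly_convex_on_with \<mu> C g" and u: "u \<in> C" and v: "v \<in> C"
    and gd: "(g has_derivative (\<lambda>h. inner h D)) (at u)"
  shows "g u + inner D (v - u) + \<mu> / 2 * (norm (v - u))\<^sup>2 \<le> g v"
proof -
  define \<phi> where "\<phi> t = g (u + t *\<^sub>R (v - u))" for t :: real
  have "((\<lambda>t::real. u + t *\<^sub>R (v - u)) has_derivative (\<lambda>t. t *\<^sub>R (v - u))) (at 0)"
    by (auto intro!: derivative_eq_intros)
  moreover have "(g has_derivative (\<lambda>h. inner h D)) (at ((\<lambda>t::real. u + t *\<^sub>R (v - u)) 0))"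
    using gd by simp
  ultimately have "((g \<circ> (\<lambda>t::real. u + t *\<^sub>R (v - u)))
      has_derivative ((\<lambda>h. inner h D) \<circ> (\<lambda>t. t *\<^sub>R (v - u)))) (at 0)"
    by (rule diff_chain_at)
  moreover have "(\<lambda>h. inner h D) \<circ> (\<lambda>t. t *\<^sub>R (v - u)) = (*) (inner (v - u) D)"
    by (auto simp: fun_eq_iff inner_commute)
  ultimately have "(\<phi> has_field_derivative (inner (v - u) D)) (at 0)"
    unfolding has_field_derivative_def \<phi>_def by (simp add: comp_def)
  then have "((\<lambda>t. (\<phi> (0 + t) - \<phi> 0) / t) \<longlongrightarrow> inner (v - u) D) (at 0)"
    by (rule DERIV_D)
  then have lim: "((\<lambda>t. (\<phi> t - \<phi> 0) / t) \<longlongrightarrow> inner (v - u) D) (at_right 0)"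
    using filterlim_at_split by force
  have lim': "((\<lambda>t::real. g v - g u - \<mu> / 2 * (1 - t) * (norm (v - u))\<^sup>2)
      \<longlongrightarrow> g v - g u - \<mu> / 2 * (1 - 0) * (norm (v - u))\<^sup>2) (at_right 0)"
    by (intro tendsto_intros)
  have "eventually (\<lambda>t. t \<in> {0<..<1}) (at_right (0::real))"
    by (rule eventually_at_right_real) simp
  then have "eventually (\<lambda>t. (\<phi> t - \<phi> 0) / t \<le> g v - g u - \<mu> / 2 * (1 - t) * (norm (v - u))\<^sup>2) (at_right 0)"
    by eventually_elim (use strongly_convex_on_with_difference_quotient[OF sc u v] in \<open>simp add: \<phi>_def\<close>)
  from tendsto_le[OF _ lim' lim this]
  show ?thesis by (simp add: inner_commute)
qed

lemma strongly_convex_on_with_midpoint: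
  assumes "strongly_convex_on_with \<mu> C g" "u \<in> C" "v \<in> C"
  shows "g ((1/2) *\<^sub>R (u + v)) \<le> (g u + g v) / 2 - \<mu> / 8 * (norm (u - v))\<^sup>2"
proof -
  have "g ((1 - 1/2) *\<^sub>R u + (1/2) *\<^sub>R v)
      \<le> (1 - 1/2) * g u + (1/2) * g v - \<mu> / 2 * (1/2) * (1 - 1/2) * (norm (u - v))\<^sup>2"
    using spec[OF bspec[OF bspec[OF assms(1)[unfolded strongly_convex_on_with_def] assms(2)] assms(3)], of "1/2"]
    by simp
  then show ?thesis by (simp add: scaleR_right_distrib add_divide_distrib)
qed

lemma residual_sq_bound:
  fixes u \<beta> \<Delta> G nb MA \<mu> :: real
  assumes "\<bar>\<beta>\<bar> \<le> \<Delta> + G * u" "\<Delta> \<le> nb + G * MA" "u \<le> MA" "0 \<le> u" "0 < \<Delta>"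
    "0 \<le> G" "0 < \<mu>" "0 \<le> nb"
  shows "u\<^sup>2 + \<beta>\<^sup>2 \<le> (nb + 3 * G * MA + 2 / \<mu> * (G\<^sup>2 + 1)) * (\<Delta> + \<mu> * u\<^sup>2)"
proof -
  define K where "K = nb + 3 * G * MA + 2 / \<mu> * (G\<^sup>2 + 1)"
  have "\<beta>\<^sup>2 \<le> (\<Delta> + G * u)\<^sup>2"
    using assms(1,4,5,6) abs_le_square_iff[of \<beta>] by (smt (verit) mult_nonneg_nonneg power_mono)
  also have "\<dots> \<le> \<Delta> * (nb + G * MA) + 2 * G * \<Delta> * MA + G\<^sup>2 * u\<^sup>2"
  proof -
    have "\<Delta> * \<Delta> \<le> \<Delta> * (nb + G * MA)" "2 * G * \<Delta> * u \<le> 2 * G * \<Delta> * MA"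
      using assms by (simp_all add: mult_left_mono)
    then show ?thesis by (simp add: power2_eq_square algebra_simps)
  qed
  finally have "\<beta>\<^sup>2 \<le> \<Delta> * (nb + G * MA) + 2 * G * \<Delta> * MA + G\<^sup>2 * u\<^sup>2" .
  moreover have "0 \<le> u\<^sup>2 + G\<^sup>2 * u\<^sup>2" by simp
  moreover have "(nb + 3 * G * MA) * \<Delta> + 2 * (G\<^sup>2 + 1) * u\<^sup>2
      = \<Delta> * (nb + G * MA) + 2 * G * \<Delta> * MA + G\<^sup>2 * u\<^sup>2 + u\<^sup>2 + (u\<^sup>2 + G\<^sup>2 * u\<^sup>2)"
    by (simp add: algebra_simps)
  ultimately have "u\<^sup>2 + \<beta>\<^sup>2 \<le> (nb + 3 * G * MA) * \<Delta> + 2 * (G\<^sup>2 + 1) * u\<^sup>2"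
    by linarith
  also have "\<dots> \<le> K * \<Delta> + K * \<mu> * u\<^sup>2"
  proof -
    have "2 * (G\<^sup>2 + 1) \<le> K * \<mu>" using assms unfolding K_def by (simp add: algebra_simps)
    moreover have "nb + 3 * G * MA \<le> K" using assms unfolding K_def by simp
    ultimately show ?thesis using assms by (intro add_mono mult_right_mono) auto
  qed
  also have "\<dots> = K * (\<Delta> + \<mu> * u\<^sup>2)" by (simp add: algebra_simps)
  finally show ?thesis unfolding K_def .
qed

lemma ereal_mult_square_le:
  assumes "0 \<le> x" "x \<le> ereal q" "0 \<le> m"
  shows "ereal m * x\<^sup>2 \<le> ereal (m * q\<^sup>2)"
proof -
  obtain p where p: "x = ereal p" "0 \<le> p" "p \<le> q" using assms(1,2) by (cases x) auto
  then have "m * p\<^sup>2 \<le> m * q\<^sup>2" using assms(3) by (intro mult_left_mono power_mono) auto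
  then show ?thesis unfolding p(1) by (simp add: power2_eq_square)
qed

locale composite_objective =
  fixes Aset :: "(real^'d) set" and B :: "real^'d^'k" and c :: "real^'k"
    and A :: "real^'d^'m" and b :: "real^'d"
    and g :: "real^'m \<Rightarrow> real" and dg :: "real^'m \<Rightarrow> real^'m" and U :: "(real^'m) set"
    and \<mu>g \<theta> :: real
  assumes finite_Aset: "finite Aset" and Aset_nonempty: "Aset \<noteq> {}"
    and D_eq: "convex hull Aset = {x. \<forall>i. (B *v x) $ i \<le> c $ i}"
    and U_sup: "(\<lambda>x. A *v x) ` (convex hull Aset) \<subseteq> U"
    and g_grad: "\<And>y. y \<in> U \<Longrightarrow> GDERIV g y :> dg y"
    and dg_cont: "continuous_on U dg"
    and mug_pos: "\<mu>g > 0"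
    and g_sc: "strongly_convex_on_with \<mu>g ((\<lambda>x. A *v x) ` (convex hull Aset)) g"
    and theta_pos: "\<theta> > 0"
    and hoffman: "\<And>t s x. {y. A *v y = t \<and> inner b y = s \<and> (\<forall>i. (B *v y) $ i \<le> c $ i)} \<noteq> {}
        \<Longrightarrow> (\<forall>i. (B *v x) $ i \<le> c $ i)
        \<Longrightarrow> infdist x {y. A *v y = t \<and> inner b y = s \<and> (\<forall>i. (B *v y) $ i \<le> c $ i)}
              \<le> \<theta> * norm (A *v x - t, inner b x - s)"
begin

definition D where "D = convex hull Aset"
definition f where "f = (\<lambda>x. g (A *v x) + inner b x)"
definition gf where "gf = (\<lambda>x. transpose A *v dg (A *v x) + b)"
definition G where "G = (SUP x\<in>D. norm (dg (A *v x)))"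
definition K where
  "K = norm b * diameter D + 3 * G * diameter ((\<lambda>x. A *v x) ` D) + 2 / \<mu>g * (G\<^sup>2 + 1)"

lemma compact_D: "compact D"
  unfolding D_def using compact_convex_hull finite_Aset finite_imp_compact by blast

lemma mem_D_iff: "y \<in> D \<longleftrightarrow> (\<forall>i. (B *v y) $ i \<le> c $ i)"
  using D_eq by (auto simp: D_def)

lemma compact_image_D: "compact ((\<lambda>x. A *v x) ` D)"
  by (rule compact_continuous_image[OF matrix_vector_mult_linear_continuous_on compact_D])

lemma g_has_derivative: "y \<in> U \<Longrightarrow> (g has_derivative (\<lambda>h. inner h (dg y))) (at y)"
  using g_grad by (simp add: gderiv_def)

lemma continuous_on_f: "continuous_on D f"
proof -
  have "continuous_on U g"
    using g_has_derivative has_derivative_continuous continuous_at_imp_continuous_on by blast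
  then have "continuous_on D (\<lambda>x. g (A *v x))"
    by (rule continuous_on_compose2[OF _ matrix_vector_mult_linear_continuous_on]) (use U_sup D_def in auto)
  then show ?thesis unfolding f_def by (intro continuous_intros)
qed

lemma G_upper:
  assumes "x \<in> D"
  shows "norm (dg (A *v x)) \<le> G"
proof -
  have "continuous_on D (\<lambda>z. dg (A *v z))"
    by (rule continuous_on_compose2[OF dg_cont matrix_vector_mult_linear_continuous_on])
      (use U_sup D_def in auto)
  then have "continuous_on D (\<lambda>z. norm (dg (A *v z)))" by (rule continuous_on_norm)
  then have "bdd_above ((\<lambda>z. norm (dg (A *v z))) ` D)"
    by (intro bounded_imp_bdd_above compact_imp_bounded compact_continuous_image compact_D)
  then show ?thesis unfolding G_def by (rule cSUP_upper[OF assms])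
qed

lemma G_nonneg: "0 \<le> G"
  using G_upper Aset_nonempty hull_subset[of Aset convex] norm_ge_zero order_trans
  unfolding D_def by blast

lemma g_gradient_ineq:
  assumes "x \<in> D" "y \<in> D"
  shows "g (A *v x) + inner (dg (A *v x)) (A *v y - A *v x) + \<mu>g / 2 * (norm (A *v y - A *v x))\<^sup>2
    \<le> g (A *v y)"
  using assms U_sup by (intro strongly_convex_on_with_gradient_ineq[OF g_sc] g_has_derivative)
    (auto simp: D_def)

lemma f_gradient_ineq:
  assumes "x \<in> D" "y \<in> D"
  shows "f x + inner (gf x) (y - x) + \<mu>g / 2 * (norm (A *v y - A *v x))\<^sup>2 \<le> f y"
proof -
  have "inner (gf x) (y - x) = inner (dg (A *v x)) (A *v y - A *v x) + inner b (y - x)"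
    unfolding gf_def by (simp add: inner_add_left dot_lmul_matrix matrix_vector_mult_diff_distrib)
  then show ?thesis using g_gradient_ineq[OF assms] unfolding f_def by (simp add: inner_diff_right)
qed

lemma g_increment_le:
  assumes "x \<in> D" "y \<in> D"
  shows "g (A *v y) - g (A *v x) \<le> G * norm (A *v x - A *v y)"
proof -
  have "- inner (dg (A *v y)) (A *v x - A *v y) \<le> norm (dg (A *v y)) * norm (A *v x - A *v y)"
    using Cauchy_Schwarz_ineq2[of "dg (A *v y)" "A *v x - A *v y"] by linarith
  also have "\<dots> \<le> G * norm (A *v x - A *v y)" using G_upper[OF assms(2)] by (intro mult_right_mono) auto
  finally show ?thesis using g_gradient_ineq[OF assms(2,1)] mug_pos
    by (smt (verit) zero_le_power2 divide_pos_pos mult_nonneg_nonneg)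
qed

lemma Xstar_nonempty: "Xstar f D \<noteq> {}"
proof -
  have "D \<noteq> {}" using Aset_nonempty hull_subset[of Aset convex] unfolding D_def by blast
  then obtain x where "x \<in> D" "\<And>y. y \<in> D \<Longrightarrow> f x \<le> f y"
    using continuous_attains_inf[OF compact_D _ continuous_on_f] by blast
  then show ?thesis unfolding Xstar_def by blast
qed

lemma closed_Xstar: "closed (Xstar f D)"
proof -
  obtain xs where "xs \<in> Xstar f D" using Xstar_nonempty by blast
  then have "Xstar f D = D \<inter> f -` {..f xs}" unfolding Xstar_def by force
  then show ?thesis
    using continuous_closed_preimage[OF continuous_on_f compact_imp_closed[OF compact_D] closed_atMost]
    by simp
qed

lemma Xstar_eq_fibre:
  assumes xs: "xs \<in> Xstar f D"
  shows "Xstar f D = {y. A *v y = A *v xs \<and> inner b y = inner b xs \<and> (\<forall>i. (B *v y) $ i \<le> c $ i)}"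
proof (intro equalityI subsetI CollectI)
  fix y assume y: "y \<in> Xstar f D"
  have xsD: "xs \<in> D" and yD: "y \<in> D" and fy: "f y = f xs"
    using xs y unfolding Xstar_def by (auto intro: antisym)
  define m where "m = (1/2) *\<^sub>R (xs + y)"
  have "m \<in> D" unfolding m_def D_def
    using convexD[OF convex_convex_hull, of xs "convex hull Aset" y "1/2" "1/2"] xsD yD
    by (simp add: D_def scaleR_right_distrib)
  then have "f xs \<le> f m" using xs unfolding Xstar_def by blast
  moreover have "g (A *v m) \<le> (g (A *v xs) + g (A *v y)) / 2 - \<mu>g / 8 * (norm (A *v xs - A *v y))\<^sup>2"
    unfolding m_def matrix_vector_mult_scaleR matrix_vector_right_distrib
    by (rule strongly_convex_on_with_midpoint[OF g_sc]) (use xsD yD D_def in auto)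
  moreover have "inner b m = (inner b xs + inner b y) / 2" unfolding m_def by (simp add: inner_add_right)
  ultimately have "\<mu>g / 8 * (norm (A *v xs - A *v y))\<^sup>2 \<le> 0"
    using fy unfolding f_def by argo
  then have Ay: "A *v y = A *v xs" using mug_pos by (simp add: mult_le_0_iff)
  then have "inner b y = inner b xs" using fy unfolding f_def by simp
  with Ay yD show "A *v y = A *v xs \<and> inner b y = inner b xs \<and> (\<forall>i. (B *v y) $ i \<le> c $ i)"
    using mem_D_iff by blast
next
  fix y assume "y \<in> {y. A *v y = A *v xs \<and> inner b y = inner b xs \<and> (\<forall>i. (B *v y) $ i \<le> c $ i)}"
  then have "y \<in> D" "f y = f xs" using mem_D_iff unfolding f_def by auto
  then show "y \<in> Xstar f D" using xs unfolding Xstar_def by auto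
qed

lemma infdist_Xstar_le:
  assumes "xs \<in> Xstar f D" "x \<in> D"
  shows "infdist x (Xstar f D) \<le> \<theta> * norm (A *v x - A *v xs, inner b x - inner b xs)"
  unfolding Xstar_eq_fibre[OF assms(1)]
  by (rule hoffman) (use assms Xstar_eq_fibre[OF assms(1)] mem_D_iff in blast)+

lemma K_pos: "0 < K"
proof -
  have "0 \<le> diameter D" "0 \<le> diameter ((\<lambda>x. A *v x) ` D)"
    using compact_D compact_image_D by (simp_all add: diameter_ge_0 compact_imp_bounded)
  moreover have "0 < 2 / \<mu>g * (G\<^sup>2 + 1)"
    using mug_pos by (intro mult_pos_pos divide_pos_pos add_nonneg_pos) auto
  ultimately show ?thesis unfolding K_def using G_nonneg by (simp add: add_nonneg_pos)
qed

lemma residual_sq_le_K_gap: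
  assumes x: "x \<in> D - Xstar f D" and xs: "xs \<in> Xstar f D"
  shows "(norm (A *v x - A *v xs))\<^sup>2 + (inner b x - inner b xs)\<^sup>2
    \<le> K * (f xs - f x - 2 * inner (gf x) (xs - x))"
proof -
  have xD: "x \<in> D" and xsD: "xs \<in> D" using x xs unfolding Xstar_def by auto
  define u where "u = norm (A *v x - A *v xs)"
  define \<beta> where "\<beta> = inner b x - inner b xs"
  define \<Delta> where "\<Delta> = f x - f xs"
  have \<Delta>_pos: "0 < \<Delta>" using x xs unfolding Xstar_def \<Delta>_def by force
  have \<Delta>_split: "\<Delta> = (g (A *v x) - g (A *v xs)) + \<beta>" unfolding \<Delta>_def \<beta>_def f_def by simp
  have g_inc: "g (A *v xs) - g (A *v x) \<le> G * u" "g (A *v x) - g (A *v xs) \<le> G * u"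
    using g_increment_le[OF xD xsD] g_increment_le[OF xsD xD] unfolding u_def
    by (simp_all add: norm_minus_commute)
  have u_le: "u \<le> diameter ((\<lambda>x. A *v x) ` D)"
    using diameter_bounded_bound[OF compact_imp_bounded[OF compact_image_D]] xD xsD
    unfolding u_def by (simp add: dist_norm)
  have "\<bar>\<beta>\<bar> \<le> norm b * norm (x - xs)"
    unfolding \<beta>_def inner_diff_right[symmetric] by (rule Cauchy_Schwarz_ineq2)
  also have "\<dots> \<le> norm b * diameter D"
    using diameter_bounded_bound[OF compact_imp_bounded[OF compact_D] xD xsD]
    by (intro mult_left_mono) (auto simp: dist_norm)
  finally have "\<bar>\<beta>\<bar> \<le> norm b * diameter D" .
  moreover have "G * u \<le> G * diameter ((\<lambda>x. A *v x) ` D)" using u_le G_nonneg by (rule mult_left_mono)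
  moreover have "0 \<le> u" "0 \<le> diameter D"
    using compact_D by (simp_all add: u_def diameter_ge_0 compact_imp_bounded)
  ultimately have "u\<^sup>2 + \<beta>\<^sup>2 \<le> K * (\<Delta> + \<mu>g * u\<^sup>2)"
    unfolding K_def using \<Delta>_split g_inc \<Delta>_pos u_le G_nonneg mug_pos
    by (intro residual_sq_bound) auto
  also have "\<dots> \<le> K * (f xs - f x - 2 * inner (gf x) (xs - x))"
  proof -
    have "f x + inner (gf x) (xs - x) + \<mu>g / 2 * u\<^sup>2 \<le> f xs"
      using f_gradient_ineq[OF xD xsD] unfolding u_def by (simp add: norm_minus_commute)
    then have "\<Delta> + \<mu>g * u\<^sup>2 \<le> f xs - f x - 2 * inner (gf x) (xs - x)"
      unfolding \<Delta>_def by argo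
    then show ?thesis using K_pos by (intro mult_left_mono) auto
  qed
  finally show ?thesis unfolding u_def \<beta>_def .
qed

lemma descent_toward_Xstar:
  assumes x: "x \<in> D - Xstar f D" and xs: "xs \<in> Xstar f D"
  shows "0 < inner (- gf x) (xs - x)"
proof -
  have "x \<in> D" "xs \<in> D" "f xs < f x" using x xs unfolding Xstar_def by force+
  then show ?thesis using f_gradient_ineq[of x xs] mug_pos
    by (smt (verit) inner_minus_left zero_le_power2 divide_pos_pos mult_nonneg_nonneg)
qed

lemma dist_Xstar_sq_le:
  assumes x: "x \<in> D - Xstar f D" and xs: "xs \<in> Xstar f D"
    and nearest: "infdist x (Xstar f D) = dist x xs"
  shows "(norm (xs - x))\<^sup>2 \<le> \<theta>\<^sup>2 * (K * (f xs - f x - 2 * inner (gf x) (xs - x)))"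
proof -
  have "norm (xs - x) \<le> \<theta> * norm (A *v x - A *v xs, inner b x - inner b xs)"
    using infdist_Xstar_le[OF xs, of x] x nearest by (simp add: dist_norm norm_minus_commute)
  then have "(norm (xs - x))\<^sup>2 \<le> (\<theta> * norm (A *v x - A *v xs, inner b x - inner b xs))\<^sup>2"
    by (intro power_mono) auto
  also have "\<dots> = \<theta>\<^sup>2 * ((norm (A *v x - A *v xs))\<^sup>2 + (inner b x - inner b xs)\<^sup>2)"
    by (simp add: norm_Pair power_mult_distrib)
  also have "\<dots> \<le> \<theta>\<^sup>2 * (K * (f xs - f x - 2 * inner (gf x) (xs - x)))"
    using residual_sq_le_K_gap[OF x xs] by (intro mult_left_mono) auto
  finally show ?thesis .
qed

theorem mu_tilde_f_ge: "ereal (1 / (2 * \<theta>\<^sup>2 * K)) * (PWidth Aset)\<^sup>2 \<le> mu_tilde_f Aset f gf"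
  unfolding mu_tilde_f_def D_def[symmetric]
proof (rule INF_greatest)
  fix x assume x: "x \<in> D - Xstar f D"
  obtain xs where xs: "xs \<in> Xstar f D" and nearest: "infdist x (Xstar f D) = dist x xs"
    using infdist_attains_inf[OF closed_Xstar Xstar_nonempty] by blast
  define a where "a = inner (- gf x) (xs - x)"
  define d where "d = inner (- gf x) (s_f Aset gf x - v_f Aset gf x)"
  define V where "V = f xs - f x - 2 * inner (gf x) (xs - x)"
  have a_pos: "0 < a" unfolding a_def using descent_toward_Xstar[OF x xs] .
  have "PWidth Aset \<le> ereal (norm (xs - x) * d / a)"
    unfolding a_def d_def using x xs a_pos[unfolded a_def] finite_Aset
    by (intro PWidth_le_FW_gap_ratio) (auto simp: Xstar_def D_def)
  then have "ereal (1 / (2 * \<theta>\<^sup>2 * K)) * (PWidth Aset)\<^sup>2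
      \<le> ereal (1 / (2 * \<theta>\<^sup>2 * K) * (norm (xs - x) * d / a)\<^sup>2)"
    using PWidth_nonneg[OF finite_Aset] K_pos by (intro ereal_mult_square_le) auto
  also have "1 / (2 * \<theta>\<^sup>2 * K) * (norm (xs - x) * d / a)\<^sup>2
      = (norm (xs - x))\<^sup>2 / (\<theta>\<^sup>2 * K) * (d\<^sup>2 / (2 * a\<^sup>2))"
    by (simp add: power_divide power_mult_distrib)
  also have "\<dots> \<le> V * (d\<^sup>2 / (2 * a\<^sup>2))"
  proof (rule mult_right_mono)
    show "(norm (xs - x))\<^sup>2 / (\<theta>\<^sup>2 * K) \<le> V"
      using dist_Xstar_sq_le[OF x xs nearest] theta_pos K_pos unfolding V_def
      by (simp add: pos_divide_le_eq ac_simps)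
  qed simp
  \<comment> \<open>this holds also for \<open>d = 0\<close>, where \<open>gammaA\<close> is \<open>a / 0 = 0\<close>\<close>
  also have "\<dots> = 1 / (2 * (gammaA Aset gf x xs)\<^sup>2) * V"
    unfolding gammaA_def a_def[symmetric] d_def[symmetric] by (simp add: power_divide)
  finally show "ereal (1 / (2 * \<theta>\<^sup>2 * K)) * (PWidth Aset)\<^sup>2
      \<le> (SUP xs\<in>{xs \<in> Xstar f D. inner (gf x) (xs - x) < 0}.
            ereal (1 / (2 * (gammaA Aset gf x xs)\<^sup>2) * (f xs - f x - 2 * inner (gf x) (xs - x))))"
    using xs a_pos unfolding V_def a_def by (intro SUP_upper2[of xs]) auto
qed

end

theorem mainTheorem11:
  fixes Aset :: "(real^'d) set"
    and B :: "real^'d^'k" and c :: "real^'k"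
    and A :: "real^'d^'m" and b :: "real^'d"
    and g :: "real^'m \<Rightarrow> real" and dg :: "real^'m \<Rightarrow> real^'m"
    and U :: "(real^'m) set"
    and \<mu>g \<theta> :: real
  assumes finA: "finite Aset" and neA: "Aset \<noteq> {}"
    and D_eq: "convex hull Aset = {x. \<forall>i. (B *v x) $ i \<le> c $ i}"
    and U_open: "open U" and U_sup: "(\<lambda>x. A *v x) ` (convex hull Aset) \<subseteq> U"
    and g_grad: "\<And>y. y \<in> U \<Longrightarrow> GDERIV g y :> dg y"
    and dg_cont: "continuous_on U dg"
    and mug_pos: "\<mu>g > 0"
    and g_sc: "strongly_convex_on_with \<mu>g ((\<lambda>x. A *v x) ` (convex hull Aset)) g"
    and theta_pos: "\<theta> > 0"
    and hoffman: "\<And>t s x. {y. A *v y = t \<and> inner b y = s \<and> (\<forall>i. (B *v y) $ i \<le> c $ i)} \<noteq> {}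
        \<Longrightarrow> (\<forall>i. (B *v x) $ i \<le> c $ i)
        \<Longrightarrow> infdist x {y. A *v y = t \<and> inner b y = s \<and> (\<forall>i. (B *v y) $ i \<le> c $ i)}
              \<le> \<theta> * norm (A *v x - t, inner b x - s)"
  shows
    "let D = convex hull Aset;
         f = (\<lambda>x. g (A *v x) + inner b x);
         gf = (\<lambda>x. transpose A *v dg (A *v x) + b);
         G = (SUP x\<in>D. norm (dg (A *v x)));
         M = diameter D;
         MA = diameter ((\<lambda>x. A *v x) ` D);
         mu = 1 / (2 * \<theta>\<^sup>2 * (norm b * M + 3 * G * MA + 2 / \<mu>g * (G\<^sup>2 + 1)))
     in mu_tilde_f Aset f gf \<ge> ereal mu * (PWidth Aset)\<^sup>2"
proof -
  interpret composite_objective Aset B c A b g dg U \<mu>g \<theta>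
    using finA neA D_eq U_sup g_grad dg_cont mug_pos g_sc theta_pos hoffman by unfold_locales
  show ?thesis
    using mu_tilde_f_ge unfolding Let_def K_def G_def D_def f_def gf_def by simp
qed

end
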